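(* For every integer $t \geq 1$, there exists a connected non-bipartite graph whose adjacency matrix has exactly five distinct eigenvalues and which has exactly $t$ distinct valencies (vertex degrees).
   Context: Eigenvalues of a graph are the eigenvalues of its adjacency matrix. Graphs are finite, simple and undirected. *)

theory Defs
  imports "Jordan_Normal_Form.Char_Poly"
begin

text \<open>A finite simple graph on vertex set {0..<n}, given by an edge relation E
 (only its restriction to {0..<n} matters).\<close>

definition simple_graph :: "nat \<Rightarrow> (nat \<Rightarrow> nat \<Rightarrow> bool) \<Rightarrow> bool" where
  "simple_graph n E \<longleftrightarrow> (\<forall>u<n. \<forall>v<n. E u v \<longleftrightarrow> E v u) \<and> (\<forall>u<n. \<not> E u u)"

definition adj_matrix :: "nat \<Rightarrow> (nat \<Rightarrow> nat \<Rightarrow> bool) \<Rightarrow> real mat" where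
  "adj_matrix n E = mat n n (\<lambda>(i, j). if E i j then 1 else 0)"

definition graph_eigenvalues :: "nat \<Rightarrow> (nat \<Rightarrow> nat \<Rightarrow> bool) \<Rightarrow> real set" where
  "graph_eigenvalues n E = {k. eigenvalue (adj_matrix n E) k}"

definition degree :: "nat \<Rightarrow> (nat \<Rightarrow> nat \<Rightarrow> bool) \<Rightarrow> nat \<Rightarrow> nat" where
  "degree n E u = card {v. v < n \<and> E u v}"

definition valencies :: "nat \<Rightarrow> (nat \<Rightarrow> nat \<Rightarrow> bool) \<Rightarrow> nat set" where
  "valencies n E = degree n E ` {0..<n}"

definition connected_graph :: "nat \<Rightarrow> (nat \<Rightarrow> nat \<Rightarrow> bool) \<Rightarrow> bool" where
  "connected_graph n E \<longleftrightarrow> n > 0 \<and>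
     (\<forall>u<n. \<forall>v<n. (\<lambda>x y. x < n \<and> y < n \<and> E x y)\<^sup>*\<^sup>* u v)"

definition bipartite :: "nat \<Rightarrow> (nat \<Rightarrow> nat \<Rightarrow> bool) \<Rightarrow> bool" where
  "bipartite n E \<longleftrightarrow> (\<exists>c :: nat \<Rightarrow> bool. \<forall>u<n. \<forall>v<n. E u v \<longrightarrow> c u \<noteq> c v)"

end

theory Submission
  imports Defs
begin

(*
  For t >= 2 take the complement of the disjoint union of the complete bipartite graphs
  K(2^j, 2^(t-1-j)), j < t. Every block has p q = c = 2^(t-1). Writing mu = lambda + 1, an
  eigenvector of A + I is determined by its sums over the 2t sides, and eliminating the
  opposite side of each block (using p q = c) leaves only mu = 0, mu^2 = c, or
  mu^2 - N mu + (2t - 1) c = 0, where N is the number of vertices; all of these occur. By AM-GM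
  N > 2t sqrt c, so the quadratic has two positive roots separated by sqrt c, and the spectrum
  has exactly five elements. A vertex has degree N - 1 - (size of the opposite side of its
  block), so the degrees are N - 1 - 2^i, i < t.
  For t = 1, K(4,3) together with a perfect matching on its 4-side is 4-regular with
  spectrum {4, 1, 0, -1, -3}.
*)

text \<open>Graphs are built on convenient finite vertex sets and transported to \<open>{0..<n}\<close>
  along a bijection \<open>g\<close>.\<close>

definition relabel :: "nat \<Rightarrow> (nat \<Rightarrow> 'a) \<Rightarrow> ('a \<Rightarrow> 'a \<Rightarrow> bool) \<Rightarrow> nat \<Rightarrow> nat \<Rightarrow> bool" where
  "relabel n g R u v \<longleftrightarrow> u < n \<and> v < n \<and> R (g u) (g v)"

definition rel_eigenvalue :: "'a set \<Rightarrow> ('a \<Rightarrow> 'a \<Rightarrow> bool) \<Rightarrow> real \<Rightarrow> bool" where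
  "rel_eigenvalue V R lam \<longleftrightarrow>
     (\<exists>f. (\<exists>y\<in>V. f y \<noteq> 0) \<and> (\<forall>y\<in>V. (\<Sum>z\<in>{z\<in>V. R y z}. f z) = lam * f y))"

lemma adj_matrix_mult_vec_index:
  assumes "v \<in> carrier_vec n" "i < n"
  shows "(adj_matrix n E *\<^sub>v v) $ i = (\<Sum>j\<in>{j. j < n \<and> E i j}. v $ j)"
proof -
  have "(adj_matrix n E *\<^sub>v v) $ i = (\<Sum>j<n. if E i j then v $ j else 0)"
    using assms by (auto simp: adj_matrix_def mult_mat_vec_def scalar_prod_def lessThan_atLeast0
        intro!: sum.cong)
  also have "\<dots> = (\<Sum>j\<in>{j. j < n \<and> E i j}. v $ j)"
    using sum.inter_filter[of "{..<n}" "\<lambda>j. v $ j" "E i"] by simp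
  finally show ?thesis .
qed

lemma eigenvalue_iff_vec_comp:
  assumes "A \<in> carrier_mat n n" "inj_on g {0..<n}"
  shows "eigenvalue A lam \<longleftrightarrow>
    (\<exists>f. vec n (\<lambda>i. f (g i)) \<noteq> 0\<^sub>v n \<and> A *\<^sub>v vec n (\<lambda>i. f (g i)) = lam \<cdot>\<^sub>v vec n (\<lambda>i. f (g i)))"
proof
  assume "eigenvalue A lam"
  then obtain v where v: "v \<in> carrier_vec n" "v \<noteq> 0\<^sub>v n" "A *\<^sub>v v = lam \<cdot>\<^sub>v v"
    using assms(1) by (auto simp: eigenvalue_def eigenvector_def)
  have "vec n (\<lambda>i. v $ inv_into {0..<n} g (g i)) = v"
    using v(1) assms(2) by auto
  then show "\<exists>f. vec n (\<lambda>i. f (g i)) \<noteq> 0\<^sub>v n \<and> A *\<^sub>v vec n (\<lambda>i. f (g i)) = lam \<cdot>\<^sub>v vec n (\<lambda>i. f (g i))"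
    using v by (intro exI[of _ "\<lambda>z. v $ inv_into {0..<n} g z"]) simp
qed (use assms(1) in \<open>force simp: eigenvalue_def eigenvector_def\<close>)

lemma simple_graph_relabel:
  assumes "\<And>y z. R y z \<Longrightarrow> R z y" "\<And>y. \<not> R y y"
  shows "simple_graph n (relabel n g R)"
  using assms unfolding simple_graph_def relabel_def by blast

context
  fixes n :: nat and g :: "nat \<Rightarrow> 'a" and V :: "'a set" and R :: "'a \<Rightarrow> 'a \<Rightarrow> bool"
  assumes bij: "bij_betw g {0..<n} V"
begin

lemma relabel_neighbours_image:
  assumes "i < n"
  shows "g ` {j. j < n \<and> relabel n g R i j} = {z\<in>V. R (g i) z}"
    and "inj_on g {j. j < n \<and> relabel n g R i j}"
  using assms bij by (auto simp: relabel_def bij_betw_def inj_on_def)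

lemma sum_relabel_neighbours:
  assumes "i < n"
  shows "(\<Sum>j\<in>{j. j < n \<and> relabel n g R i j}. h (g j)) = (\<Sum>z\<in>{z\<in>V. R (g i) z}. h z)"
  using sum.reindex[OF relabel_neighbours_image(2)[OF assms], of h]
  by (simp add: relabel_neighbours_image(1)[OF assms])

lemma degree_relabel:
  assumes "i < n"
  shows "degree n (relabel n g R) i = card {z\<in>V. R (g i) z}"
  unfolding degree_def using card_image[OF relabel_neighbours_image(2)[OF assms]]
  by (simp add: relabel_neighbours_image(1)[OF assms])

lemma valencies_relabel: "valencies n (relabel n g R) = (\<lambda>y. card {z\<in>V. R y z}) ` V"
proof -
  have "valencies n (relabel n g R) = (\<lambda>y. card {z\<in>V. R y z}) ` (g ` {0..<n})"
    unfolding valencies_def image_image by (rule image_cong) (simp_all add: degree_relabel)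
  then show ?thesis using bij by (simp add: bij_betw_def)
qed

lemma eigenvalue_relabel_iff:
  "eigenvalue (adj_matrix n (relabel n g R)) lam \<longleftrightarrow> rel_eigenvalue V R lam"
proof -
  let ?A = "adj_matrix n (relabel n g R)"
  have all_V: "(\<forall>i<n. P (g i)) \<longleftrightarrow> (\<forall>y\<in>V. P y)" for P
    using bij by (auto simp: bij_betw_def)
  have mult: "(?A *\<^sub>v vec n (\<lambda>i. f (g i))) $ i = (\<Sum>z\<in>{z\<in>V. R (g i) z}. f z)" if "i < n" for f i
  proof -
    have "(?A *\<^sub>v vec n (\<lambda>i. f (g i))) $ i = (\<Sum>j\<in>{j. j < n \<and> relabel n g R i j}. f (g j))"
      using that by (simp add: adj_matrix_mult_vec_index)
    then show ?thesis using sum_relabel_neighbours[OF that] by simp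
  qed
  have "eigenvalue ?A lam \<longleftrightarrow> (\<exists>f. vec n (\<lambda>i. f (g i)) \<noteq> 0\<^sub>v n \<and>
          ?A *\<^sub>v vec n (\<lambda>i. f (g i)) = lam \<cdot>\<^sub>v vec n (\<lambda>i. f (g i)))"
    using bij by (intro eigenvalue_iff_vec_comp) (auto simp: adj_matrix_def bij_betw_def)
  also have "\<dots> \<longleftrightarrow> rel_eigenvalue V R lam"
    unfolding rel_eigenvalue_def
  proof (intro ex_cong1 arg_cong2[where f = "(\<and>)"])
    fix f :: "'a \<Rightarrow> real"
    have "vec n (\<lambda>i. f (g i)) = 0\<^sub>v n \<longleftrightarrow> (\<forall>i<n. f (g i) = 0)"
      by (auto simp: vec_eq_iff)
    then show "vec n (\<lambda>i. f (g i)) \<noteq> 0\<^sub>v n \<longleftrightarrow> (\<exists>y\<in>V. f y \<noteq> 0)"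
      using all_V[of "\<lambda>y. f y = 0"] by blast
    have "?A *\<^sub>v vec n (\<lambda>i. f (g i)) = lam \<cdot>\<^sub>v vec n (\<lambda>i. f (g i)) \<longleftrightarrow>
          (\<forall>i<n. (\<Sum>z\<in>{z\<in>V. R (g i) z}. f z) = lam * f (g i))"
      using mult by (auto simp: vec_eq_iff adj_matrix_def simp del: index_mult_mat_vec)
    then show "?A *\<^sub>v vec n (\<lambda>i. f (g i)) = lam \<cdot>\<^sub>v vec n (\<lambda>i. f (g i)) \<longleftrightarrow>
          (\<forall>y\<in>V. (\<Sum>z\<in>{z\<in>V. R y z}. f z) = lam * f y)"
      using all_V[of "\<lambda>y. (\<Sum>z\<in>{z\<in>V. R y z}. f z) = lam * f y"] by blast
  qed
  finally show ?thesis .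
qed

lemma connected_graph_relabel:
  assumes "n > 0"
    and diam2: "\<And>y z. y \<in> V \<Longrightarrow> z \<in> V \<Longrightarrow> y \<noteq> z \<Longrightarrow> R y z \<or> (\<exists>w\<in>V. R y w \<and> R w z)"
  shows "connected_graph n (relabel n g R)"
  unfolding connected_graph_def
proof (intro conjI allI impI \<open>n > 0\<close>)
  fix u v assume u: "u < n" and v: "v < n"
  let ?E = "\<lambda>x y. x < n \<and> y < n \<and> relabel n g R x y"
  have edge: "?E x y \<longleftrightarrow> x < n \<and> y < n \<and> R (g x) (g y)" for x y
    by (auto simp: relabel_def)
  have gV: "g u \<in> V" "g v \<in> V" using bij u v by (auto simp: bij_betw_def)
  show "?E\<^sup>*\<^sup>* u v"
  proof (cases "u = v")
    case False
    then have "g u \<noteq> g v" using bij u v by (auto simp: bij_betw_def inj_on_def)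
    then consider "R (g u) (g v)" | w where "w \<in> V" "R (g u) w" "R w (g v)"
      using diam2[OF gV] by blast
    then show ?thesis
    proof cases
      case 1
      then show ?thesis using u v edge by blast
    next
      case 2
      then obtain j where "j < n" "g j = w" using bij by (auto simp: bij_betw_def)
      then have "?E u j" "?E j v" using 2 u v edge by auto
      then show ?thesis by (rule rtranclp.rtrancl_into_rtrancl[OF r_into_rtranclp])
    qed
  qed simp
qed

lemma not_bipartite_relabel:
  assumes "a \<in> V" "b \<in> V" "d \<in> V" "R a b" "R b d" "R a d"
  shows "\<not> bipartite n (relabel n g R)"
proof
  assume "bipartite n (relabel n g R)"
  then obtain col :: "nat \<Rightarrow> bool" where col: "\<forall>u<n. \<forall>v<n. relabel n g R u v \<longrightarrow> col u \<noteq> col v"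
    unfolding bipartite_def by blast
  have "\<exists>i<n. g i = y" if "y \<in> V" for y
    using bij that by (auto simp: bij_betw_def)
  then obtain ia ib id where "ia < n" "ib < n" "id < n" "g ia = a" "g ib = b" "g id = d"
    using assms(1-3) by meson
  then have "relabel n g R ia ib" "relabel n g R ib id" "relabel n g R ia id"
    using assms(4-6) by (simp_all add: relabel_def)
  then have "col ia \<noteq> col ib" "col ib \<noteq> col id" "col ia \<noteq> col id"
    using col \<open>ia < n\<close> \<open>ib < n\<close> \<open>id < n\<close> by blast+
  then show False by blast
qed

end

theorem graph_from_relation:
  fixes V :: "'a set" and R :: "'a \<Rightarrow> 'a \<Rightarrow> bool"
  assumes "finite V"
    and "\<And>y z. R y z \<Longrightarrow> R z y" "\<And>y. \<not> R y y"
    and "\<And>y z. y \<in> V \<Longrightarrow> z \<in> V \<Longrightarrow> y \<noteq> z \<Longrightarrow> R y z \<or> (\<exists>w\<in>V. R y w \<and> R w z)"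
    and "a \<in> V" "b \<in> V" "d \<in> V" "R a b" "R b d" "R a d"
  shows "\<exists>n E. simple_graph n E \<and> connected_graph n E \<and> \<not> bipartite n E \<and>
    graph_eigenvalues n E = {lam. rel_eigenvalue V R lam} \<and>
    valencies n E = (\<lambda>y. card {z\<in>V. R y z}) ` V"
proof -
  obtain g where bij: "bij_betw g {0..<card V} V"
    using ex_bij_betw_nat_finite[OF \<open>finite V\<close>] by blast
  have "card V > 0" using assms(1,5) card_gt_0_iff by blast
  let ?E = "relabel (card V) g R"
  have "simple_graph (card V) ?E"
    using assms(2,3) by (rule simple_graph_relabel)
  moreover have "connected_graph (card V) ?E"
    using \<open>card V > 0\<close> assms(4) by (rule connected_graph_relabel[OF bij])
  moreover have "\<not> bipartite (card V) ?E"
    using assms(5-) by (rule not_bipartite_relabel[OF bij])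
  moreover have "graph_eigenvalues (card V) ?E = {lam. rel_eigenvalue V R lam}"
    by (simp add: graph_eigenvalues_def eigenvalue_relabel_iff[OF bij])
  ultimately show ?thesis using valencies_relabel[OF bij] by blast
qed

lemma quadratic_roots_around:
  fixes b d s :: real
  assumes "0 < d" "0 < s" and neg: "s\<^sup>2 - b * s + d < 0"
  obtains m\<^sub>1 m\<^sub>2 where "0 < m\<^sub>1" "m\<^sub>1 < s" "s < m\<^sub>2" "\<And>m. m\<^sup>2 - b * m + d = 0 \<longleftrightarrow> m = m\<^sub>1 \<or> m = m\<^sub>2"
proof -
  define D where "D = b\<^sup>2 - 4 * d"
  have square: "4 * (m\<^sup>2 - b * m + d) = (2 * m - b)\<^sup>2 - D" for m
    by (simp add: D_def power2_eq_square algebra_simps)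
  have "(2 * s - b)\<^sup>2 < D" using square[of s] neg by simp
  then have "0 < D" using zero_le_power2[of "2 * s - b"] by linarith
  define r where "r = sqrt D"
  have "r\<^sup>2 = D" using \<open>0 < D\<close> by (simp add: r_def)
  have "\<bar>2 * s - b\<bar> < r"
    using real_sqrt_less_mono[OF \<open>(2 * s - b)\<^sup>2 < D\<close>] by (simp add: r_def)
  have "0 < b * s" using neg assms(1) zero_le_power2[of s] by linarith
  then have "0 < b" using \<open>0 < s\<close> by (simp add: zero_less_mult_iff)
  have "D < b\<^sup>2" using \<open>0 < d\<close> by (simp add: D_def)
  then have "r < b" using real_sqrt_less_mono \<open>0 < b\<close> by (fastforce simp: r_def)
  show ?thesis
  proof (rule that[of "(b - r) / 2" "(b + r) / 2"])
    show "0 < (b - r) / 2" "(b - r) / 2 < s" "s < (b + r) / 2"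
      using \<open>r < b\<close> \<open>\<bar>2 * s - b\<bar> < r\<close> by auto
    fix m
    have "m\<^sup>2 - b * m + d = 0 \<longleftrightarrow> (2 * m - b)\<^sup>2 = r\<^sup>2" using square[of m] \<open>r\<^sup>2 = D\<close> by auto
    also have "\<dots> \<longleftrightarrow> 2 * m - b = r \<or> 2 * m - b = - r" by (rule power2_eq_iff)
    finally show "m\<^sup>2 - b * m + d = 0 \<longleftrightarrow> m = (b - r) / 2 \<or> m = (b + r) / 2" by auto
  qed
qed

text \<open>The complement of the disjoint union of the complete bipartite graphs \<open>K(p j, q j)\<close>,
  \<open>j < k\<close>: vertex \<open>(j, b, i)\<close> is the \<open>i\<close>-th vertex on side \<open>b\<close> of block \<open>j\<close>.\<close>

locale biclique_complement =
  fixes k :: nat and p q :: "nat \<Rightarrow> nat" and c :: nat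
  assumes two_le_k: "2 \<le> k"
    and side_prod: "\<And>j. j < k \<Longrightarrow> p j * q j = c"
    and p_first: "p 0 = 1" and q_first: "q 0 = c"
    and p_last: "p (k - 1) = c" and q_last: "q (k - 1) = 1"
    and two_le_c: "2 \<le> c"
begin

definition side :: "nat \<Rightarrow> bool \<Rightarrow> nat" where
  "side j b = (if b then p j else q j)"

definition verts :: "(nat \<times> bool \<times> nat) set" where
  "verts = (SIGMA j:{..<k}. SIGMA b:UNIV. {..<side j b})"

definition adj :: "nat \<times> bool \<times> nat \<Rightarrow> nat \<times> bool \<times> nat \<Rightarrow> bool" where
  "adj y z \<longleftrightarrow> y \<noteq> z \<and> (fst y = fst z \<longrightarrow> fst (snd y) = fst (snd z))"

definition num_verts :: nat where
  "num_verts = (\<Sum>j<k. p j + q j)"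

lemma mem_verts [simp]: "(j, b, i) \<in> verts \<longleftrightarrow> j < k \<and> i < side j b"
  by (simp add: verts_def)

lemma finite_verts: "finite verts"
  unfolding verts_def by (intro finite_SigmaI) auto

lemma side_prod_real: "j < k \<Longrightarrow> real (side j b) * real (side j (\<not> b)) = real c"
  using side_prod[of j] by (cases b) (simp_all add: side_def mult.commute flip: of_nat_mult)

lemma side_pos:
  assumes "j < k" shows "0 < side j b"
proof -
  have "p j * q j \<noteq> 0" using side_prod[OF assms] two_le_c by simp
  then show ?thesis by (cases b) (auto simp: side_def)
qed

lemma sum_verts: "(\<Sum>y\<in>verts. f y) = (\<Sum>j<k. \<Sum>b\<in>UNIV. \<Sum>i<side j b. f (j, b, i))"
proof -
  have "(\<Sum>y\<in>verts. f y) = (\<Sum>j<k. \<Sum>x\<in>(SIGMA b:UNIV. {..<side j b}). f (j, x))"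
    unfolding verts_def by (subst sum.Sigma) (auto simp: split_def)
  also have "\<dots> = (\<Sum>j<k. \<Sum>b\<in>UNIV. \<Sum>i<side j b. f (j, b, i))"
    by (subst sum.Sigma) (auto simp: split_def)
  finally show ?thesis .
qed

lemma card_verts: "card verts = num_verts"
proof -
  have "card verts = (\<Sum>y\<in>verts. 1)" by simp
  then show ?thesis by (simp only: sum_verts) (simp add: num_verts_def UNIV_bool side_def add.commute)
qed

lemma neighbours:
  assumes "(j, b, i) \<in> verts"
  shows "{z\<in>verts. adj (j, b, i) z} = verts - insert (j, b, i) (Pair j ` Pair (\<not> b) ` {..<side j (\<not> b)})"
  using assms by (auto simp: adj_def)

lemma sum_neighbours:
  fixes f :: "nat \<times> bool \<times> nat \<Rightarrow> 'a::ab_group_add"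
  assumes y: "(j, b, i) \<in> verts"
  shows "(\<Sum>z\<in>{z\<in>verts. adj (j, b, i) z}. f z) =
    (\<Sum>z\<in>verts. f z) - f (j, b, i) - (\<Sum>i'<side j (\<not> b). f (j, \<not> b, i'))"
proof -
  have "(\<Sum>z\<in>{z\<in>verts. adj (j, b, i) z}. f z) =
      (\<Sum>z\<in>verts. f z) - (\<Sum>z\<in>insert (j, b, i) (Pair j ` Pair (\<not> b) ` {..<side j (\<not> b)}). f z)"
    unfolding neighbours[OF y] by (rule sum_diff[OF finite_verts]) (use y in auto)
  moreover have "(\<Sum>z\<in>insert (j, b, i) (Pair j ` Pair (\<not> b) ` {..<side j (\<not> b)}). f z) =
      f (j, b, i) + (\<Sum>i'<side j (\<not> b). f (j, \<not> b, i'))"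
    by (subst sum.insert) (auto simp: sum.reindex inj_on_def image_image)
  ultimately show ?thesis by (simp add: algebra_simps)
qed

lemma card_neighbours:
  assumes y: "(j, b, i) \<in> verts"
  shows "card {z\<in>verts. adj (j, b, i) z} = num_verts - 1 - side j (\<not> b)"
proof -
  have "card {z\<in>verts. adj (j, b, i) z} =
      card verts - card (insert (j, b, i) (Pair j ` Pair (\<not> b) ` {..<side j (\<not> b)}))"
    unfolding neighbours[OF y] using y by (intro card_Diff_subset finite_subset[OF _ finite_verts]) auto
  moreover have "card (insert (j, b, i) (Pair j ` Pair (\<not> b) ` {..<side j (\<not> b)})) = Suc (side j (\<not> b))"
    by (subst card_insert_disjoint) (auto simp: card_image inj_on_def)
  ultimately show ?thesis by (simp add: card_verts)
qed

definition block_sum :: "(nat \<times> bool \<times> nat \<Rightarrow> real) \<Rightarrow> nat \<Rightarrow> bool \<Rightarrow> real" where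
  "block_sum f j b = (\<Sum>i<side j b. f (j, b, i))"

context
  fixes f :: "nat \<times> bool \<times> nat \<Rightarrow> real" and \<mu> :: real
  assumes eigen: "\<forall>y\<in>verts. (\<Sum>z\<in>{z\<in>verts. adj y z}. f z) = (\<mu> - 1) * f y"
begin

lemma eigen_equation:
  assumes "j < k" "i < side j b"
  shows "\<mu> * f (j, b, i) = (\<Sum>y\<in>verts. f y) - block_sum f j (\<not> b)"
  using eigen[rule_format, of "(j, b, i)"] sum_neighbours[of j b i f] assms
  by (simp add: block_sum_def algebra_simps)

lemma block_sum_equation:
  assumes "j < k"
  shows "\<mu> * block_sum f j b = side j b * ((\<Sum>y\<in>verts. f y) - block_sum f j (\<not> b))"
  using eigen_equation[OF assms] by (simp add: block_sum_def sum_distrib_left)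

lemma block_sum_closed:
  assumes j: "j < k"
  shows "block_sum f j b * (\<mu>\<^sup>2 - c) = (\<Sum>y\<in>verts. f y) * (side j b * \<mu> - c)"
proof -
  let ?\<sigma> = "\<Sum>y\<in>verts. f y"
  note eq = block_sum_equation[OF j]
  have eq': "\<mu> * block_sum f j (\<not> b) = side j (\<not> b) * (?\<sigma> - block_sum f j b)"
    using eq[of "\<not> b"] by simp
  have "block_sum f j b * (\<mu>\<^sup>2 - c) = \<mu> * (\<mu> * block_sum f j b) - c * block_sum f j b"
    by (simp add: power2_eq_square algebra_simps)
  also have "\<dots> = side j b * \<mu> * ?\<sigma> - side j b * (\<mu> * block_sum f j (\<not> b)) - c * block_sum f j b"
    unfolding eq[of b] by (simp add: algebra_simps)
  also have "\<dots> = side j b * \<mu> * ?\<sigma> - real (side j b) * real (side j (\<not> b)) * ?\<sigma>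
      + (real (side j b) * real (side j (\<not> b)) - c) * block_sum f j b"
    unfolding eq' by (simp add: algebra_simps)
  also have "\<dots> = ?\<sigma> * (side j b * \<mu> - c)"
    by (simp add: side_prod_real[OF j] algebra_simps)
  finally show ?thesis .
qed

lemma total_sum_equation:
  "(\<Sum>y\<in>verts. f y) * (\<mu>\<^sup>2 - c) = (\<Sum>y\<in>verts. f y) * (num_verts * \<mu> - 2 * k * c)"
proof -
  let ?\<sigma> = "\<Sum>y\<in>verts. f y"
  have "?\<sigma> * (\<mu>\<^sup>2 - c) = (\<Sum>j<k. \<Sum>b\<in>UNIV. block_sum f j b * (\<mu>\<^sup>2 - c))"
    by (simp add: sum_verts block_sum_def sum_distrib_right)
  also have "\<dots> = (\<Sum>j<k. \<Sum>b\<in>UNIV. ?\<sigma> * (side j b * \<mu> - c))"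
    by (simp add: block_sum_closed)
  also have "\<dots> = ?\<sigma> * (num_verts * \<mu> - 2 * k * c)"
    by (simp add: UNIV_bool side_def num_verts_def sum_distrib_left sum_distrib_right
        sum_subtractf algebra_simps)
  finally show ?thesis .
qed

lemma eigenvalue_shift_cases:
  assumes nonzero: "\<exists>y\<in>verts. f y \<noteq> 0"
  shows "\<mu> = 0 \<or> \<mu>\<^sup>2 = c \<or> \<mu>\<^sup>2 - num_verts * \<mu> + (2 * real k - 1) * c = 0"
proof (rule ccontr)
  assume "\<not> ?thesis"
  then have "\<mu> \<noteq> 0" and "\<mu>\<^sup>2 - c \<noteq> 0" and quad: "\<mu>\<^sup>2 - num_verts * \<mu> + (2 * real k - 1) * c \<noteq> 0"
    by auto
  show False
  proof (cases "(\<Sum>y\<in>verts. f y) = 0")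
    case True
    then have "block_sum f j b = 0" if "j < k" for j b
      using block_sum_closed[OF that] \<open>\<mu>\<^sup>2 - c \<noteq> 0\<close> by simp
    then have "f y = 0" if "y \<in> verts" for y
      using that eigen_equation True \<open>\<mu> \<noteq> 0\<close> by (cases y) auto
    then show False using nonzero by blast
  next
    case False
    then have "\<mu>\<^sup>2 - c = num_verts * \<mu> - 2 * k * c"
      using total_sum_equation by simp
    then show False using quad by (simp add: algebra_simps)
  qed
qed

end

lemma rel_eigenvalue_blockwise:
  fixes w :: "nat \<Rightarrow> bool \<Rightarrow> real"
  assumes nonzero: "j\<^sub>0 < k" "w j\<^sub>0 b\<^sub>0 \<noteq> 0"
    and eigen: "\<And>j b. j < k \<Longrightarrow>
      (\<Sum>j'<k. \<Sum>b'\<in>UNIV. side j' b' * w j' b') - w j b - side j (\<not> b) * w j (\<not> b) = lam * w j b"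
  shows "rel_eigenvalue verts adj lam"
  unfolding rel_eigenvalue_def
proof (intro exI[of _ "\<lambda>y. w (fst y) (fst (snd y))"] conjI ballI)
  show "\<exists>y\<in>verts. w (fst y) (fst (snd y)) \<noteq> 0"
    using nonzero side_pos[OF nonzero(1), of b\<^sub>0] by (intro bexI[of _ "(j\<^sub>0, b\<^sub>0, 0)"]) auto
  fix y assume "y \<in> verts"
  then obtain j b i where "y = (j, b, i)" "(j, b, i) \<in> verts" by (cases y) auto
  then show "(\<Sum>z\<in>{z\<in>verts. adj y z}. w (fst z) (fst (snd z))) = lam * w (fst y) (fst (snd y))"
    using eigen by (simp add: sum_neighbours sum_verts)
qed

lemma rel_eigenvalue_minus_one: "rel_eigenvalue verts adj (-1)"
proof -
  define f :: "nat \<times> bool \<times> nat \<Rightarrow> real" where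
    "f y = (if y = (0, False, 0) then 1 else 0) - (if y = (0, False, 1) then 1 else 0)" for y
  have in_verts: "(0, False, 0) \<in> verts" "(0, False, 1) \<in> verts"
    using two_le_k two_le_c by (auto simp: side_def q_first)
  have total: "(\<Sum>y\<in>verts. f y) = 0"
    unfolding f_def using in_verts finite_verts by (simp add: sum_subtractf)
  have block: "(\<Sum>i<side j b. f (j, b, i)) = 0" for j b
  proof (cases "j = 0 \<and> \<not> b")
    case True
    then show ?thesis using two_le_c by (simp add: f_def side_def q_first sum_subtractf)
  qed (auto simp: f_def)
  show ?thesis
    unfolding rel_eigenvalue_def
  proof (intro exI[of _ f] conjI ballI)
    show "\<exists>y\<in>verts. f y \<noteq> 0" using in_verts by (auto simp: f_def)
    fix y assume "y \<in> verts"
    then obtain j b i where "y = (j, b, i)" "(j, b, i) \<in> verts" by (cases y) auto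
    then show "(\<Sum>z\<in>{z\<in>verts. adj y z}. f z) = -1 * f y"
      using sum_neighbours[of j b i f] total block[of j "\<not> b"] by simp
  qed
qed

lemma rel_eigenvalue_sqrt:
  fixes \<mu> :: real
  assumes "\<mu>\<^sup>2 = real c"
  shows "rel_eigenvalue verts adj (\<mu> - 1)"
proof -
  \<comment> \<open>Supported on the blocks \<open>0\<close> and \<open>k - 1\<close>, whose contributions to the total cancel.\<close>
  define w :: "nat \<Rightarrow> bool \<Rightarrow> real" where
    "w j b = (if j = 0 then (if b then \<mu> else -1) else if j = k - 1 then (if b then 1 else -\<mu>) else 0)"
    for j b
  have last: "k - 1 \<noteq> 0" "k - 1 < k" using two_le_k by auto
  have "(\<Sum>j<k. \<Sum>b\<in>UNIV. side j b * w j b) = (\<Sum>j\<in>{0, k - 1}. \<Sum>b\<in>UNIV. side j b * w j b)"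
    using two_le_k by (intro sum.mono_neutral_right) (auto simp: w_def)
  also have "\<dots> = 0"
    using last by (simp add: w_def UNIV_bool side_def p_first q_first p_last[simplified] q_last[simplified])
  finally have total: "(\<Sum>j<k. \<Sum>b\<in>UNIV. side j b * w j b) = 0" .
  show ?thesis
  proof (rule rel_eigenvalue_blockwise[of 0 w False])
    fix j b assume "j < k"
    show "(\<Sum>j'<k. \<Sum>b'\<in>UNIV. side j' b' * w j' b') - w j b - side j (\<not> b) * w j (\<not> b) = (\<mu> - 1) * w j b"
      using last assms unfolding total
      by (cases b) (auto simp: w_def side_def p_first q_first p_last[simplified] q_last[simplified] power2_eq_square algebra_simps)
  qed (use two_le_k in \<open>auto simp: w_def\<close>)
qed

lemma rel_eigenvalue_quadratic_root:
  fixes \<mu> :: real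
  assumes root: "\<mu>\<^sup>2 - num_verts * \<mu> + (2 * real k - 1) * c = 0"
  shows "rel_eigenvalue verts adj (\<mu> - 1)"
proof -
  define w :: "nat \<Rightarrow> bool \<Rightarrow> real" where "w j b = \<mu> - side j (\<not> b)" for j b
  have "(\<Sum>b\<in>UNIV. side j b * w j b) = (p j + q j) * \<mu> - 2 * c" if "j < k" for j
    using side_prod_real[OF that, of True] by (simp add: w_def UNIV_bool side_def algebra_simps)
  then have "(\<Sum>j<k. \<Sum>b\<in>UNIV. side j b * w j b) = (\<Sum>j<k. (p j + q j) * \<mu> - 2 * c)"
    by (intro sum.cong) simp_all
  also have "\<dots> = num_verts * \<mu> - 2 * k * c"
    by (simp add: num_verts_def sum_subtractf sum_distrib_right)
  finally have total: "(\<Sum>j<k. \<Sum>b\<in>UNIV. side j b * w j b) = num_verts * \<mu> - 2 * k * c" .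
  have "w 0 True \<noteq> 0 \<or> w 0 False \<noteq> 0"
    using two_le_c by (auto simp: w_def side_def p_first q_first)
  then obtain b\<^sub>0 where "w 0 b\<^sub>0 \<noteq> 0" by blast
  then show ?thesis
  proof (rule rel_eigenvalue_blockwise[of 0, rotated])
    fix j b assume j: "j < k"
    have "num_verts * \<mu> - 2 * k * c - (\<mu> - side j (\<not> b)) - side j (\<not> b) * (\<mu> - side j b)
        = (\<mu> - 1) * (\<mu> - side j (\<not> b)) - (\<mu>\<^sup>2 - num_verts * \<mu> + (2 * real k - 1) * c)
          + (real (side j b) * real (side j (\<not> b)) - c)"
      by (simp add: power2_eq_square algebra_simps)
    then show "(\<Sum>j'<k. \<Sum>b'\<in>UNIV. side j' b' * w j' b') - w j b - side j (\<not> b) * w j (\<not> b) = (\<mu> - 1) * w j b"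
      unfolding total using root side_prod_real[OF j] by (simp add: w_def)
  qed (use two_le_k in auto)
qed

lemma rel_eigenvalue_iff:
  fixes \<mu> :: real
  shows "rel_eigenvalue verts adj (\<mu> - 1) \<longleftrightarrow> \<mu> = 0 \<or> \<mu>\<^sup>2 = c \<or> \<mu>\<^sup>2 - num_verts * \<mu> + (2 * real k - 1) * c = 0"
  using eigenvalue_shift_cases rel_eigenvalue_minus_one rel_eigenvalue_sqrt rel_eigenvalue_quadratic_root
  by (auto simp: rel_eigenvalue_def)

lemma two_sqrt_le_sides:
  assumes "j < k"
  shows "2 * sqrt c \<le> real (p j) + real (q j)"
proof (rule power2_le_imp_le)
  have "(2 * sqrt c)\<^sup>2 = 4 * (real (p j) * real (q j))"
    using side_prod[OF assms] by (simp add: power2_eq_square flip: of_nat_mult)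
  also have "\<dots> \<le> (real (p j) + real (q j))\<^sup>2"
    using zero_le_power2[of "real (p j) - real (q j)"] by (simp add: power2_eq_square algebra_simps)
  finally show "(2 * sqrt c)\<^sup>2 \<le> (real (p j) + real (q j))\<^sup>2" by simp
qed simp

lemma two_k_sqrt_less_num_verts: "2 * k * sqrt c < num_verts"
proof -
  have "(2 * sqrt c)\<^sup>2 = 4 * real c" by simp
  also have "\<dots> < (1 + real c)\<^sup>2"
    using two_le_c zero_less_power2[of "real c - 1"] by (simp add: power2_eq_square algebra_simps)
  finally have "(2 * sqrt c)\<^sup>2 < (1 + real c)\<^sup>2" .
  then have "2 * sqrt c < p 0 + q 0"
    using power2_less_imp_less by (fastforce simp: p_first q_first)
  then have "(\<Sum>j<k. 2 * sqrt c) < (\<Sum>j<k. real (p j) + real (q j))"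
    using two_le_k two_sqrt_le_sides by (intro sum_strict_mono_ex1) auto
  then show ?thesis by (simp add: num_verts_def)
qed

lemma card_rel_eigenvalues: "card {lam. rel_eigenvalue verts adj lam} = 5"
proof -
  define s where "s = sqrt c"
  have "0 < s" "s\<^sup>2 = c" using two_le_c by (simp_all add: s_def)
  have "s\<^sup>2 - num_verts * s + (2 * real k - 1) * c = s * (2 * k * s - num_verts)"
    using \<open>s\<^sup>2 = c\<close> by (simp add: power2_eq_square algebra_simps)
  also have "\<dots> < 0"
    using two_k_sqrt_less_num_verts \<open>0 < s\<close> by (simp add: s_def mult_pos_neg)
  finally have neg: "s\<^sup>2 - num_verts * s + (2 * real k - 1) * c < 0" .
  have pos: "0 < (2 * real k - 1) * c" using two_le_k two_le_c by simp
  obtain m\<^sub>1 m\<^sub>2 where m: "0 < m\<^sub>1" "m\<^sub>1 < s" "s < m\<^sub>2"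
    and roots: "\<And>m :: real. m\<^sup>2 - num_verts * m + (2 * real k - 1) * c = 0 \<longleftrightarrow> m = m\<^sub>1 \<or> m = m\<^sub>2"
    by (rule quadratic_roots_around[OF pos \<open>0 < s\<close> neg]) blast
  have "\<mu>\<^sup>2 = c \<longleftrightarrow> \<mu> = s \<or> \<mu> = - s" for \<mu> :: real
    using power2_eq_iff[of \<mu> s] \<open>s\<^sup>2 = c\<close> by simp
  then have "{\<mu>. rel_eigenvalue verts adj (\<mu> - 1)} = {0, s, - s, m\<^sub>1, m\<^sub>2}"
    by (auto simp: rel_eigenvalue_iff roots)
  moreover have "{lam. rel_eigenvalue verts adj lam} = (\<lambda>\<mu>. \<mu> - 1) ` {\<mu>. rel_eigenvalue verts adj (\<mu> - 1)}"
    by (auto intro: image_eqI[where x = "_ + 1"])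
  ultimately have "card {lam. rel_eigenvalue verts adj lam} = card ((\<lambda>\<mu>. \<mu> - 1) ` {0, s, - s, m\<^sub>1, m\<^sub>2})"
    by simp
  also have "\<dots> = card {0, s, - s, m\<^sub>1, m\<^sub>2}"
    by (rule card_image) (simp add: inj_on_def)
  also have "\<dots> = 5" using m \<open>0 < s\<close> by simp
  finally show ?thesis .
qed

lemma card_neighbours_image: "(\<lambda>y. card {z\<in>verts. adj y z}) ` verts = {num_verts - 1 - side j b | j b. j < k}"
proof (intro equalityI subsetI)
  fix d assume "d \<in> (\<lambda>y. card {z\<in>verts. adj y z}) ` verts"
  then obtain j b i where "(j, b, i) \<in> verts" "d = card {z\<in>verts. adj (j, b, i) z}" by auto
  then show "d \<in> {num_verts - 1 - side j b | j b. j < k}"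
    by (auto simp: card_neighbours)
next
  fix d assume "d \<in> {num_verts - 1 - side j b | j b. j < k}"
  then obtain j b where "j < k" "d = num_verts - 1 - side j b" by blast
  moreover have "(j, \<not> b, 0) \<in> verts" using side_pos[OF \<open>j < k\<close>] \<open>j < k\<close> by simp
  ultimately show "d \<in> (\<lambda>y. card {z\<in>verts. adj y z}) ` verts"
    by (intro image_eqI[of _ _ "(j, \<not> b, 0)"]) (simp_all add: card_neighbours)
qed

theorem graph_exists:
  "\<exists>n E. simple_graph n E \<and> connected_graph n E \<and> \<not> bipartite n E \<and>
     card (graph_eigenvalues n E) = 5 \<and>
     valencies n E = {num_verts - 1 - side j b | j b. j < k}"
proof -
  have triangle: "(0, False, 0) \<in> verts" "(0, False, 1) \<in> verts" "(1, True, 0) \<in> verts"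
    using two_le_k two_le_c side_pos[of 0 True] side_pos[of 1 True] by (auto simp: side_def q_first)
  have "\<exists>w\<in>verts. adj y w \<and> adj w z" if "fst y = fst z" for y z
    using that triangle side_pos[of 0 True] two_le_k
    by (intro bexI[of _ "(if fst y = 0 then 1 else 0, True, 0)"]) (auto simp: adj_def)
  then have diameter: "adj y z \<or> (\<exists>w\<in>verts. adj y w \<and> adj w z)"
    if "y \<in> verts" "z \<in> verts" "y \<noteq> z" for y z
    using that by (auto simp: adj_def)
  have "adj (0, False, 0) (0, False, 1)" "adj (0, False, 1) (1, True, 0)" "adj (0, False, 0) (1, True, 0)"
    by (simp_all add: adj_def)
  then have "\<exists>n E. simple_graph n E \<and> connected_graph n E \<and> \<not> bipartite n E \<and>
      graph_eigenvalues n E = {lam. rel_eigenvalue verts adj lam} \<and>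
      valencies n E = (\<lambda>y. card {z\<in>verts. adj y z}) ` verts"
    by (intro graph_from_relation[OF finite_verts _ _ diameter triangle]) (auto simp: adj_def)
  then show ?thesis unfolding card_neighbours_image using card_rel_eigenvalues by metis
qed

end

text \<open>\<open>K(4,3)\<close> on \<open>{0..3} \<union> {4..6}\<close> plus the matching \<open>{0,1}, {2,3}\<close>.\<close>

definition matched_join :: "nat \<Rightarrow> nat \<Rightarrow> bool" where
  "matched_join u v \<longleftrightarrow> (u < 4 \<longleftrightarrow> 4 \<le> v) \<or> (u \<noteq> v \<and> u < 4 \<and> v < 4 \<and> (u < 2 \<longleftrightarrow> v < 2))"

lemma ball_less_7: "(\<forall>y\<in>{0..<7::nat}. P y) \<longleftrightarrow> P 0 \<and> P 1 \<and> P 2 \<and> P 3 \<and> P 4 \<and> P 5 \<and> P 6"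
  by (auto simp: less_Suc_eq numeral_eq_Suc)

lemma sum_filter_less_7:
  "(\<Sum>z\<in>{z\<in>{0..<7::nat}. P z}. f z) =
    (if P 0 then f 0 else 0) + (if P 1 then f 1 else 0) + (if P 2 then f 2 else 0) +
    (if P 3 then f 3 else 0) + (if P 4 then f 4 else 0) + (if P 5 then f 5 else 0) +
    (if P 6 then f 6 else (0::'a::comm_monoid_add))"
proof -
  have "(\<Sum>z\<in>{z\<in>{0..<7::nat}. P z}. f z) = (\<Sum>z\<in>{0..<7}. if P z then f z else 0)"
    by (rule sum.inter_filter) simp
  then show ?thesis
    by (simp add: atLeast0LessThan lessThan_nat_numeral add.assoc add.left_commute add.commute)
qed

lemma neighbour_sums_matched_join:
  fixes f :: "nat \<Rightarrow> 'a::comm_monoid_add"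
  defines "N y \<equiv> (\<Sum>z\<in>{z\<in>{0..<7}. matched_join y z}. f z)"
  shows "N 0 = f 1 + f 4 + f 5 + f 6" "N 1 = f 0 + f 4 + f 5 + f 6"
    "N 2 = f 3 + f 4 + f 5 + f 6" "N 3 = f 2 + f 4 + f 5 + f 6"
    "N 4 = f 0 + f 1 + f 2 + f 3" "N 5 = f 0 + f 1 + f 2 + f 3" "N 6 = f 0 + f 1 + f 2 + f 3"
  unfolding N_def sum_filter_less_7 by (simp_all add: matched_join_def add.assoc)

lemma card_neighbours_matched_join: "\<forall>y\<in>{0..<7}. card {z\<in>{0..<7}. matched_join y z} = 4"
proof -
  have "card {z\<in>{0..<7}. matched_join y z} = (\<Sum>z\<in>{z\<in>{0..<7::nat}. matched_join y z}. 1)" for y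
    by simp
  then show ?thesis
    unfolding ball_less_7 by (simp only: sum_filter_less_7) (simp add: matched_join_def)
qed

lemma eigen_equations_matched_join:
  fixes f :: "nat \<Rightarrow> real"
  shows "(\<forall>y\<in>{0..<7::nat}. (\<Sum>z\<in>{z\<in>{0..<7}. matched_join y z}. f z) = lam * f y) \<longleftrightarrow>
    f 1 + f 4 + f 5 + f 6 = lam * f 0 \<and> f 0 + f 4 + f 5 + f 6 = lam * f 1 \<and>
    f 3 + f 4 + f 5 + f 6 = lam * f 2 \<and> f 2 + f 4 + f 5 + f 6 = lam * f 3 \<and>
    f 0 + f 1 + f 2 + f 3 = lam * f 4 \<and> f 0 + f 1 + f 2 + f 3 = lam * f 5 \<and>
    f 0 + f 1 + f 2 + f 3 = lam * f 6"
  unfolding ball_less_7 neighbour_sums_matched_join ..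

lemma eigenvalue_matched_join_cases:
  fixes f :: "nat \<Rightarrow> real"
  assumes nonzero: "y < 7" "f y \<noteq> 0"
    and eq: "f 1 + f 4 + f 5 + f 6 = lam * f 0" "f 0 + f 4 + f 5 + f 6 = lam * f 1"
      "f 3 + f 4 + f 5 + f 6 = lam * f 2" "f 2 + f 4 + f 5 + f 6 = lam * f 3"
      "f 0 + f 1 + f 2 + f 3 = lam * f 4" "f 0 + f 1 + f 2 + f 3 = lam * f 5"
      "f 0 + f 1 + f 2 + f 3 = lam * f 6"
  shows "lam \<in> {-1, 0, 1, 4, -3}"
proof (rule ccontr)
  assume "lam \<notin> {-1, 0, 1, 4, -3}"
  then have "lam + 1 \<noteq> 0" "lam \<noteq> 0" "lam - 1 \<noteq> 0" "(lam - 4) * (lam + 3) \<noteq> 0"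
    by auto
  have "(lam + 1) * (f 0 - f 1) = 0" "(lam + 1) * (f 2 - f 3) = 0"
    "lam * (f 5 - f 4) = 0" "lam * (f 6 - f 4) = 0"
    using eq unfolding ring_distribs mult_1_left by linarith+
  then have f1: "f 1 = f 0" and f3: "f 3 = f 2" and f5: "f 5 = f 4" and f6: "f 6 = f 4"
    using \<open>lam + 1 \<noteq> 0\<close> \<open>lam \<noteq> 0\<close> by simp_all
  have "(lam - 1) * (f 0 - f 2) = 0"
    using eq f1 f3 f5 f6 unfolding ring_distribs mult_1_left by linarith
  then have f2: "f 2 = f 0" using \<open>lam - 1 \<noteq> 0\<close> by simp
  have f04: "(lam - 1) * f 0 = 3 * f 4" and f40: "lam * f 4 = 4 * f 0"
    using eq f1 f2 f3 f5 f6 unfolding ring_distribs mult_1_left by linarith+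
  have "(lam - 4) * (lam + 3) * f 0 = lam * ((lam - 1) * f 0) - 12 * f 0"
    by (simp add: algebra_simps)
  also have "\<dots> = 0"
    unfolding f04 using f40 by (simp add: algebra_simps)
  finally have "f 0 = 0" using \<open>(lam - 4) * (lam + 3) \<noteq> 0\<close> by simp
  moreover from this have "f 4 = 0" using f40 \<open>lam \<noteq> 0\<close> by simp
  ultimately have "\<forall>y\<in>{0..<7::nat}. f y = 0"
    unfolding ball_less_7 using f1 f2 f3 f5 f6 by simp
  then show False using nonzero by auto
qed

lemma rel_eigenvalue_matched_join_iff:
  "rel_eigenvalue {0..<7} matched_join lam \<longleftrightarrow>
    (\<exists>f :: nat \<Rightarrow> real. (\<exists>y<7. f y \<noteq> 0) \<and>
      f 1 + f 4 + f 5 + f 6 = lam * f 0 \<and> f 0 + f 4 + f 5 + f 6 = lam * f 1 \<and>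
      f 3 + f 4 + f 5 + f 6 = lam * f 2 \<and> f 2 + f 4 + f 5 + f 6 = lam * f 3 \<and>
      f 0 + f 1 + f 2 + f 3 = lam * f 4 \<and> f 0 + f 1 + f 2 + f 3 = lam * f 5 \<and>
      f 0 + f 1 + f 2 + f 3 = lam * f 6)"
  unfolding rel_eigenvalue_def eigen_equations_matched_join by (simp add: Bex_def)

lemma rel_eigenvalues_matched_join:
  "{lam. rel_eigenvalue {0..<7} matched_join lam} = {-1, 0, 1, 4, -3}"
proof (intro equalityI subsetI)
  fix lam assume "lam \<in> {lam. rel_eigenvalue {0..<7} matched_join lam}"
  then show "lam \<in> {-1, 0, 1, 4, -3}"
    unfolding mem_Collect_eq rel_eigenvalue_matched_join_iff
    by (elim exE conjE) (rule eigenvalue_matched_join_cases; assumption)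
next
  fix lam :: real assume "lam \<in> {-1, 0, 1, 4, -3}"
  then consider "lam = -1" | "lam = 0" | "lam = 1" | "lam = 4" | "lam = -3" by auto
  then show "lam \<in> {lam. rel_eigenvalue {0..<7} matched_join lam}"
  proof cases
    case 1
    show ?thesis
      unfolding mem_Collect_eq rel_eigenvalue_matched_join_iff
      by (intro exI[of _ "\<lambda>z. if z = 0 then 1 else if z = 1 then -1 else 0"] conjI exI[of _ 0]) (simp_all add: 1)
  next
    case 2
    show ?thesis
      unfolding mem_Collect_eq rel_eigenvalue_matched_join_iff
      by (intro exI[of _ "\<lambda>z. if z = 4 then 1 else if z = 5 then -1 else 0"] conjI exI[of _ 4]) (simp_all add: 2)
  next
    case 3
    show ?thesis
      unfolding mem_Collect_eq rel_eigenvalue_matched_join_iff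
      by (intro exI[of _ "\<lambda>z. if z < 2 then 1 else if z < 4 then -1 else 0"] conjI exI[of _ 0]) (simp_all add: 3)
  next
    case 4
    show ?thesis
      unfolding mem_Collect_eq rel_eigenvalue_matched_join_iff
      by (intro exI[of _ "\<lambda>z. 1"] conjI exI[of _ 0]) (simp_all add: 4)
  next
    case 5
    show ?thesis
      unfolding mem_Collect_eq rel_eigenvalue_matched_join_iff
      by (intro exI[of _ "\<lambda>z. if z < 4 then 3 else -4"] conjI exI[of _ 0]) (simp_all add: 5)
  qed
qed

lemma regular_graph_five_eigenvalues:
  "\<exists>n E. simple_graph n E \<and> connected_graph n E \<and> \<not> bipartite n E \<and>
     card (graph_eigenvalues n E) = 5 \<and> card (valencies n E) = 1"
proof -
  have diameter: "matched_join y z \<or> (\<exists>w\<in>{0..<7}. matched_join y w \<and> matched_join w z)"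
    if "y \<in> {0..<7}" "z \<in> {0..<7}" "y \<noteq> z" for y z
  proof (cases "y < 4 \<longleftrightarrow> z < 4")
    case True
    then have "matched_join y (if y < 4 then 4 else 0)" "matched_join (if y < 4 then 4 else 0) z"
      by (simp_all add: matched_join_def)
    then show ?thesis by (intro disjI2 bexI[of _ "if y < 4 then 4 else 0"]) simp_all
  qed (auto simp: matched_join_def)
  have "\<exists>n E. simple_graph n E \<and> connected_graph n E \<and> \<not> bipartite n E \<and>
      graph_eigenvalues n E = {lam. rel_eigenvalue {0..<7} matched_join lam} \<and>
      valencies n E = (\<lambda>y. card {z\<in>{0..<7}. matched_join y z}) ` {0..<7}"
    by (rule graph_from_relation[of _ _ 0 1 4, OF _ _ _ diameter]) (auto simp: matched_join_def)
  then obtain n E where "simple_graph n E" "connected_graph n E" "\<not> bipartite n E"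
    and eigenvalues: "graph_eigenvalues n E = {lam. rel_eigenvalue {0..<7} matched_join lam}"
    and valencies: "valencies n E = (\<lambda>y. card {z\<in>{0..<7}. matched_join y z}) ` {0..<7}"
    by blast
  moreover have "valencies n E = (\<lambda>_. 4) ` {0..<7::nat}"
    unfolding valencies using card_neighbours_matched_join by (intro image_cong) auto
  then have "card (valencies n E) = 1" by (simp add: image_constant_conv)
  moreover have "card (graph_eigenvalues n E) = 5"
    unfolding eigenvalues rel_eigenvalues_matched_join by simp
  ultimately show ?thesis by blast
qed

lemma graph_five_eigenvalues_many_valencies:
  assumes "2 \<le> t"
  shows "\<exists>n E. simple_graph n E \<and> connected_graph n E \<and> \<not> bipartite n E \<and>
     card (graph_eigenvalues n E) = 5 \<and> card (valencies n E) = t"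
proof -
  interpret G: biclique_complement t "\<lambda>j. 2 ^ j" "\<lambda>j. 2 ^ (t - 1 - j)" "2 ^ (t - 1)"
  proof
    show "(2::nat) ^ j * 2 ^ (t - 1 - j) = 2 ^ (t - 1)" if "j < t" for j
      using that by (simp flip: power_add)
    have "(2::nat) ^ 1 \<le> 2 ^ (t - 1)" using assms by (intro power_increasing) auto
    then show "2 \<le> (2::nat) ^ (t - 1)" by simp
  qed (use assms in simp_all)
  let ?deg = "\<lambda>i. G.num_verts - 1 - 2 ^ i"
  have "{G.num_verts - 1 - G.side j b | j b. j < t} = ?deg ` {..<t}"
  proof (intro equalityI subsetI)
    fix d assume "d \<in> {G.num_verts - 1 - G.side j b | j b. j < t}"
    then obtain j b where "j < t" "d = G.num_verts - 1 - G.side j b" by blast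
    then have "d = ?deg (if b then j else t - 1 - j)"
      by (simp only: G.side_def) (simp add: if_distrib)
    then show "d \<in> ?deg ` {..<t}" using \<open>j < t\<close> by auto
  next
    fix d assume "d \<in> ?deg ` {..<t}"
    then obtain i where "i < t" "d = ?deg i" by blast
    then have "d = G.num_verts - 1 - G.side i True" unfolding G.side_def by simp
    then show "d \<in> {G.num_verts - 1 - G.side j b | j b. j < t}" using \<open>i < t\<close> by blast
  qed
  moreover have "inj_on ?deg {..<t}"
  proof (rule inj_onI)
    have "(2::nat) ^ (t - 1) < G.num_verts"
      unfolding G.num_verts_def
      using member_le_sum[of "t - 1" "{..<t}" "\<lambda>j. (2::nat) ^ j + 2 ^ (t - 1 - j)"] assms by simp
    moreover have "(2::nat) ^ i \<le> 2 ^ (t - 1)" if "i \<in> {..<t}" for i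
      using that by (intro power_increasing) auto
    ultimately have small: "(2::nat) ^ i < G.num_verts" if "i \<in> {..<t}" for i
      using that le_less_trans by blast
    fix i i' assume "i \<in> {..<t}" "i' \<in> {..<t}" "?deg i = ?deg i'"
    then have "(2::nat) ^ i = 2 ^ i'"
      using small[of i] small[of i'] by linarith
    then show "i = i'" by simp
  qed
  ultimately have "card {G.num_verts - 1 - G.side j b | j b. j < t} = t"
    by (simp add: card_image)
  moreover obtain n E where "simple_graph n E" "connected_graph n E" "\<not> bipartite n E"
    "card (graph_eigenvalues n E) = 5" "valencies n E = {G.num_verts - 1 - G.side j b | j b. j < t}"
    using G.graph_exists by blast
  ultimately show ?thesis by metis
qed

theorem theorem3:
  fixes t :: nat
  assumes "t \<ge> 1"
  shows "\<exists>n E. simple_graph n E \<and> connected_graph n E \<and> \<not> bipartite n E \<and>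
           card (graph_eigenvalues n E) = 5 \<and> card (valencies n E) = t"
proof (cases "t = 1")
  case True
  then show ?thesis using regular_graph_five_eigenvalues by simp
next
  case False
  then show ?thesis using assms graph_five_eigenvalues_many_valencies by simp
qed

end
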